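(* Let $\mathcal{E},\mathcal{F}$ satisfy: (i) $d^{(k)}_{ij}\ge0$ for all $1\le i<j\le5$, $1\le k\le4$ with $i+j+k=8$; (ii) if $d^{(1)}_{15},d^{(1)}_{24},d^{(4)}_{12}<0$ then $d^{(1)}_{25}=0$. Then a general section $\mathcal{A}\in H^0(\bigwedge^2\mathcal{F}\otimes\mathcal{E}\otimes\det\mathcal{E}^\vee)$ (i.e. all sections outside a proper Zariski-closed subset) has no $G$-translate which is in normal form of type $(K)$ at any point $p\in\mathbb{P}^1$, for any $1\le K\le4$.
   Context: Work over $\mathbb{C}$. Fix $g\ge0$, $N=g+4$, $\mathcal{E}\cong\bigoplus_{k=1}^4\mathcal{O}_{\mathbb{P}^1}(e_k)$ ($1\le e_1\le\dots\le e_4$, $\sum e_k=N$), $\mathcal{F}\cong\bigoplus_{i=1}^5\mathcal{O}(f_i)$ ($f_1\le\dots\le f_5$, $\sum f_i=2N$), splittings fixed; $d^{(k)}_{ij}=f_i+f_j+e_k-N$. A section is a quadruple $(A_1,\dots,A_4)$ of $5\times5$ alternating matrices whose $(i,j)$ entry $a^{(k)}_{ij}$ of $A_k$ is a homogeneous form in $\mathbb{C}[s,t]$ of degree $d^{(k)}_{ij}$. $G$ is the group of pairs $(g_4,g_5)$ of global automorphisms of $\mathcal{E},\mathcal{F}$ (as matrices w.r.t. the splittings, $(g_4)_{kl}$ of degree $e_k-e_l$, $(g_5)_{ij}$ of degree $f_i-f_j$) with $\det(g_4)^2=\det(g_5)$, acting by $(A_1,\dots,A_4)^t\mapsto\det(g_4)^{-1}g_4(A_1,\dots,A_4)^t$,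 $A_k\mapsto g_5A_kg_5^t$. A section is in normal form of type $(K)$ at $p$ if every entry of $A_K$ vanishes at $p$. *)

theory Defs
  imports Complex_Main "HOL-Combinatorics.Permutations"
begin

text \<open>Binary forms over C are represented by the functions C x C -> C they define.
  A binary form of degree d (d an integer) is such a function given by coefficients;
  for d < 0 the only form is 0.\<close>

definition form_of :: "int \<Rightarrow> (nat \<Rightarrow> complex) \<Rightarrow> complex \<Rightarrow> complex \<Rightarrow> complex" where
  "form_of d c s t = (if d < 0 then 0 else (\<Sum>m\<le>nat d. c m * s ^ m * t ^ (nat d - m)))"

definition hom_form :: "int \<Rightarrow> (complex \<Rightarrow> complex \<Rightarrow> complex) \<Rightarrow> bool" where
  "hom_form d \<phi> \<longleftrightarrow> (\<exists>c. \<phi> = form_of d c)"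

text \<open>Degree of the (i,j) entry of A_k: d^(k)_ij = f_i + f_j + e_k - N.\<close>
definition dd :: "(nat \<Rightarrow> int) \<Rightarrow> (nat \<Rightarrow> int) \<Rightarrow> int \<Rightarrow> nat \<Rightarrow> nat \<Rightarrow> nat \<Rightarrow> int" where
  "dd e f N k i j = f i + f j + e k - N"

text \<open>Sections: coefficient data c(k,i,j,m) = coefficient of s^m t^(d-m) in a^(k)_ij, stored
  for 1 <= k <= 4, 1 <= i < j <= 5 only (the rest determined by antisymmetry).\<close>
definition sections :: "(nat \<Rightarrow> int) \<Rightarrow> (nat \<Rightarrow> int) \<Rightarrow> int \<Rightarrow> (nat \<times> nat \<times> nat \<times> nat \<Rightarrow> complex) set" where
  "sections e f N = {c. \<forall>k i j m. c (k, i, j, m) \<noteq> 0 \<longrightarrow>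
      k \<in> {1..4} \<and> 1 \<le> i \<and> i < j \<and> j \<le> 5 \<and> 0 \<le> dd e f N k i j \<and> m \<le> nat (dd e f N k i j)}"

definition entry :: "(nat \<Rightarrow> int) \<Rightarrow> (nat \<Rightarrow> int) \<Rightarrow> int \<Rightarrow> (nat \<times> nat \<times> nat \<times> nat \<Rightarrow> complex)
    \<Rightarrow> nat \<Rightarrow> nat \<Rightarrow> nat \<Rightarrow> complex \<Rightarrow> complex \<Rightarrow> complex" where
  "entry e f N c k i j =
     (if i < j then form_of (dd e f N k i j) (\<lambda>m. c (k, i, j, m))
      else if j < i then (\<lambda>s t. - form_of (dd e f N k j i) (\<lambda>m. c (k, j, i, m)) s t)
      else (\<lambda>s t. 0))"

inductive polyfun :: "(('a \<Rightarrow> complex) \<Rightarrow> complex) \<Rightarrow> bool" where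
  pconst: "polyfun (\<lambda>x. a)"
| pvar: "polyfun (\<lambda>x. x v)"
| padd: "polyfun P \<Longrightarrow> polyfun Q \<Longrightarrow> polyfun (\<lambda>x. P x + Q x)"
| pmult: "polyfun P \<Longrightarrow> polyfun Q \<Longrightarrow> polyfun (\<lambda>x. P x * Q x)"

definition zariski_closed_in :: "('a \<Rightarrow> complex) set \<Rightarrow> ('a \<Rightarrow> complex) set \<Rightarrow> bool" where
  "zariski_closed_in V Z \<longleftrightarrow>
     (\<exists>S. (\<forall>P\<in>S. polyfun P) \<and> Z = {x\<in>V. \<forall>P\<in>S. P x = 0})"

text \<open>Matrices of binary forms indexed by {1..n}; global automorphisms of
  the split bundle O(w_1) + ... + O(w_n): entry (k,l) of degree w_k - w_l, with a
  two-sided inverse of the same shape.\<close>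
definition graded :: "nat \<Rightarrow> (nat \<Rightarrow> int) \<Rightarrow> (nat \<Rightarrow> nat \<Rightarrow> complex \<Rightarrow> complex \<Rightarrow> complex) \<Rightarrow> bool" where
  "graded n w g \<longleftrightarrow> (\<forall>k\<in>{1..n}. \<forall>l\<in>{1..n}. hom_form (w k - w l) (g k l))"

definition mprod :: "nat \<Rightarrow> (nat \<Rightarrow> nat \<Rightarrow> complex \<Rightarrow> complex \<Rightarrow> complex)
    \<Rightarrow> (nat \<Rightarrow> nat \<Rightarrow> complex \<Rightarrow> complex \<Rightarrow> complex) \<Rightarrow> nat \<Rightarrow> nat \<Rightarrow> complex \<Rightarrow> complex \<Rightarrow> complex" where
  "mprod n g h k l s t = (\<Sum>m\<in>{1..n}. g k m s t * h m l s t)"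

definition is_aut :: "nat \<Rightarrow> (nat \<Rightarrow> int) \<Rightarrow> (nat \<Rightarrow> nat \<Rightarrow> complex \<Rightarrow> complex \<Rightarrow> complex) \<Rightarrow> bool" where
  "is_aut n w g \<longleftrightarrow> graded n w g \<and>
     (\<exists>h. graded n w h \<and>
        (\<forall>k\<in>{1..n}. \<forall>l\<in>{1..n}. \<forall>s t.
            mprod n g h k l s t = (if k = l then 1 else 0) \<and>
            mprod n h g k l s t = (if k = l then 1 else 0)))"

definition detf :: "nat \<Rightarrow> (nat \<Rightarrow> nat \<Rightarrow> complex \<Rightarrow> complex \<Rightarrow> complex) \<Rightarrow> complex \<Rightarrow> complex \<Rightarrow> complex" where
  "detf n g s t = (\<Sum>p | p permutes {1..n}. of_int (sign p) * (\<Prod>i\<in>{1..n}. g i (p i) s t))"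

definition inG :: "(nat \<Rightarrow> int) \<Rightarrow> (nat \<Rightarrow> int)
    \<Rightarrow> (nat \<Rightarrow> nat \<Rightarrow> complex \<Rightarrow> complex \<Rightarrow> complex) \<Rightarrow> (nat \<Rightarrow> nat \<Rightarrow> complex \<Rightarrow> complex \<Rightarrow> complex) \<Rightarrow> bool" where
  "inG e f g4 g5 \<longleftrightarrow> is_aut 4 e g4 \<and> is_aut 5 f g5 \<and>
     (\<forall>s t. (detf 4 g4 s t) ^ 2 = detf 5 g5 s t)"

definition translate_entry :: "(nat \<Rightarrow> int) \<Rightarrow> (nat \<Rightarrow> int) \<Rightarrow> int
    \<Rightarrow> (nat \<Rightarrow> nat \<Rightarrow> complex \<Rightarrow> complex \<Rightarrow> complex) \<Rightarrow> (nat \<Rightarrow> nat \<Rightarrow> complex \<Rightarrow> complex \<Rightarrow> complex)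
    \<Rightarrow> (nat \<times> nat \<times> nat \<times> nat \<Rightarrow> complex) \<Rightarrow> nat \<Rightarrow> nat \<Rightarrow> nat \<Rightarrow> complex \<Rightarrow> complex \<Rightarrow> complex" where
  "translate_entry e f N g4 g5 c K i j s t =
     inverse (detf 4 g4 s t) *
       (\<Sum>l\<in>{1..4}. g4 K l s t *
          (\<Sum>a\<in>{1..5}. \<Sum>b\<in>{1..5}. g5 i a s t * entry e f N c l a b s t * g5 j b s t))"

text \<open>Normal form of type (K) at the point p = [s0:t0] of P^1: every entry of A_K vanishes at p.\<close>
definition normal_form_at :: "(nat \<Rightarrow> int) \<Rightarrow> (nat \<Rightarrow> int) \<Rightarrow> int
    \<Rightarrow> (nat \<Rightarrow> nat \<Rightarrow> complex \<Rightarrow> complex \<Rightarrow> complex) \<Rightarrow> (nat \<Rightarrow> nat \<Rightarrow> complex \<Rightarrow> complex \<Rightarrow> complex)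
    \<Rightarrow> (nat \<times> nat \<times> nat \<times> nat \<Rightarrow> complex) \<Rightarrow> nat \<Rightarrow> complex \<Rightarrow> complex \<Rightarrow> bool" where
  "normal_form_at e f N g4 g5 c K s0 t0 \<longleftrightarrow>
     (\<forall>i\<in>{1..5}. \<forall>j\<in>{1..5}. translate_entry e f N g4 g5 c K i j s0 t0 = 0)"

end

theory Submission
  imports Defs "Jordan_Normal_Form.Determinant"
begin

(* If a translate (g4, g5).A is in normal form of type (K) at p, then, since g5(p) and det g4(p)
   are invertible, the K-th row mu of g4(p) is a nonzero vector with sum_l mu_l A_l(p) = 0.
   Reading off the entries of A_1, ..., A_4 in four fixed slots (i, j) gives a 4 x 4 matrix with
   mu in its kernel, so its determinant, a binary form whose coefficients are polynomials in the
   section, vanishes at p. Two choices of four slots give two such forms F and G with a common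
   zero, so their resultant, again a polynomial in the section, vanishes. Condition (i), together
   with f_5 >= f_1, makes all eight slots have nonnegative degree, so some section has F = s^a and
   G = t^b, where the resultant is nonzero. *)

section \<open>Binary forms with polynomially varying coefficients\<close>

lemma polyfun_cmult: "polyfun P \<Longrightarrow> polyfun (\<lambda>x. a * P x)"
  by (rule polyfun.pmult[OF polyfun.pconst])

lemma polyfun_if: "polyfun P \<Longrightarrow> polyfun Q \<Longrightarrow> polyfun (\<lambda>x. if b then P x else Q x)"
  by (cases b) auto

lemma polyfun_sum:
  "finite A \<Longrightarrow> (\<And>a. a \<in> A \<Longrightarrow> polyfun (P a)) \<Longrightarrow> polyfun (\<lambda>x. \<Sum>a\<in>A. P a x)"
  by (induction A rule: finite_induct) (auto intro: polyfun.intros)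

lemma polyfun_prod:
  "finite A \<Longrightarrow> (\<And>a. a \<in> A \<Longrightarrow> polyfun (P a)) \<Longrightarrow> polyfun (\<lambda>x. \<Prod>a\<in>A. P a x)"
  by (induction A rule: finite_induct) (auto intro: polyfun.intros)

lemma polyfun_det:
  assumes "\<And>x. M x \<in> carrier_mat n n" "\<And>i j. i < n \<Longrightarrow> j < n \<Longrightarrow> polyfun (\<lambda>x. M x $$ (i, j))"
  shows "polyfun (\<lambda>x. det (M x))"
  unfolding det_def'[OF assms(1)]
proof (intro polyfun_sum polyfun_cmult)
  fix p assume "p \<in> {p. p permutes {0..<n}}"
  then show "polyfun (\<lambda>x. \<Prod>i\<in>{0..<n}. M x $$ (i, p i))"
    by (intro polyfun_prod[where P = "\<lambda>i x. M x $$ (i, p i)"] assms(2)) (auto simp: permutes_in_image)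
qed (simp add: finite_permutations)

definition coeff_conv :: "nat \<Rightarrow> nat \<Rightarrow> (nat \<Rightarrow> complex) \<Rightarrow> (nat \<Rightarrow> complex) \<Rightarrow> nat \<Rightarrow> complex" where
  "coeff_conv n1 n2 a b k = (\<Sum>i\<le>k. if i \<le> n1 \<and> k - i \<le> n2 then a i * b (k - i) else 0)"

lemma form_of_mult:
  assumes "0 \<le> d1" "0 \<le> d2"
  shows "form_of d1 a s t * form_of d2 b s t = form_of (d1 + d2) (coeff_conv (nat d1) (nat d2) a b) s t"
proof -
  define n1 n2 where "n1 = nat d1" and "n2 = nat d2"
  define g where "g i j = (if i \<le> n1 \<and> j \<le> n2 then a i * b j * s ^ (i + j) * t ^ (n1 + n2 - (i + j)) else 0)"
    for i j
  have "form_of d1 a s t * form_of d2 b s t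
      = (\<Sum>i\<le>n1. a i * s ^ i * t ^ (n1 - i)) * (\<Sum>j\<le>n2. b j * s ^ j * t ^ (n2 - j))"
    using assms by (simp add: form_of_def n1_def n2_def)
  also have "\<dots> = (\<Sum>i\<le>n1. \<Sum>j\<le>n2. a i * b j * s ^ (i + j) * t ^ (n1 + n2 - (i + j)))"
    unfolding sum_product
  proof (intro sum.cong refl)
    fix i j assume "i \<in> {..n1}" "j \<in> {..n2}"
    then have "n1 + n2 - (i + j) = (n1 - i) + (n2 - j)" by auto
    then show "a i * s ^ i * t ^ (n1 - i) * (b j * s ^ j * t ^ (n2 - j))
        = a i * b j * s ^ (i + j) * t ^ (n1 + n2 - (i + j))"
      by (simp add: power_add algebra_simps)
  qed
  also have "\<dots> = (\<Sum>(i, j)\<in>{..n1} \<times> {..n2}. g i j)"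
    by (simp add: sum.cartesian_product[symmetric] g_def)
  also have "\<dots> = (\<Sum>(i, j)\<in>{(i, j). i + j \<le> n1 + n2}. g i j)"
  proof (rule sum.mono_neutral_left)
    show "finite {(i, j). i + j \<le> n1 + n2}"
      by (rule finite_subset[of _ "{..n1 + n2} \<times> {..n1 + n2}"]) auto
  qed (auto simp: g_def split: if_splits)
  also have "\<dots> = (\<Sum>k\<le>n1 + n2. \<Sum>i\<le>k. g i (k - i))"
    by (rule sum.triangle_reindex_eq)
  also have "\<dots> = (\<Sum>k\<le>n1 + n2. coeff_conv n1 n2 a b k * s ^ k * t ^ (n1 + n2 - k))"
    unfolding coeff_conv_def sum_distrib_right by (intro sum.cong refl) (auto simp: g_def)
  also have "\<dots> = form_of (d1 + d2) (coeff_conv n1 n2 a b) s t"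
    using assms by (simp add: form_of_def n1_def n2_def nat_add_distrib)
  finally show ?thesis by (simp add: n1_def n2_def)
qed

lemma form_of_zero: "form_of d (\<lambda>m. 0) s t = 0"
  by (simp add: form_of_def)

lemma form_of_add: "form_of d a s t + form_of d b s t = form_of d (\<lambda>m. a m + b m) s t"
  by (simp add: form_of_def sum.distrib algebra_simps)

lemma form_of_cmult: "k * form_of d a s t = form_of d (\<lambda>m. k * a m) s t"
  by (simp add: form_of_def sum_distrib_left algebra_simps)

lemma form_of_monomial_s: "form_of (int D) (\<lambda>m. if m = D then \<sigma> else 0) s t = \<sigma> * s ^ D"
proof -
  have "(\<Sum>m\<le>D. (if m = D then \<sigma> else 0) * s ^ m * t ^ (D - m)) = (\<Sum>m\<le>D. if m = D then \<sigma> * s ^ D else 0)"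
    by (rule sum.cong) auto
  then show ?thesis by (simp add: form_of_def)
qed

lemma form_of_monomial_t: "form_of (int D) (\<lambda>m. if m = 0 then \<sigma> else 0) s t = \<sigma> * t ^ D"
proof -
  have "(\<Sum>m\<le>D. (if m = 0 then \<sigma> else 0) * s ^ m * t ^ (D - m)) = (\<Sum>m\<le>D. if m = 0 then \<sigma> * t ^ D else 0)"
    by (rule sum.cong) auto
  then show ?thesis by (simp add: form_of_def)
qed

lemma form_of_coeffs_eq:
  assumes "\<And>s t. form_of d a s t = form_of d b s t" "0 \<le> d" "m \<le> nat d"
  shows "a m = b m"
proof -
  have "\<forall>s. (\<Sum>i\<le>nat d. a i * s ^ i) = (\<Sum>i\<le>nat d. b i * s ^ i)"
    using assms(1)[of _ 1] assms(2) by (simp add: form_of_def)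
  then show ?thesis using polyfun_eq_coeffs assms(3) by blast
qed

definition poly_form_family :: "int \<Rightarrow> (('v \<Rightarrow> complex) \<Rightarrow> complex \<Rightarrow> complex \<Rightarrow> complex) \<Rightarrow> bool" where
  "poly_form_family d F \<longleftrightarrow> (\<exists>C. (\<forall>m. polyfun (C m)) \<and> (\<forall>x. F x = form_of d (\<lambda>m. C m x)))"

lemma poly_form_familyI:
  "(\<And>m. polyfun (C m)) \<Longrightarrow> (\<And>x s t. F x s t = form_of d (\<lambda>m. C m x) s t) \<Longrightarrow> poly_form_family d F"
  unfolding poly_form_family_def by (auto simp: fun_eq_iff)

lemma poly_form_familyE:
  assumes "poly_form_family d F"
  obtains C where "\<And>m. polyfun (C m)" "\<And>x s t. F x s t = form_of d (\<lambda>m. C m x) s t"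
  using assms unfolding poly_form_family_def by metis

lemma poly_form_family_cong:
  "poly_form_family d F \<Longrightarrow> d = d' \<Longrightarrow> (\<And>x s t. F x s t = G x s t) \<Longrightarrow> poly_form_family d' G"
  by (metis poly_form_familyE poly_form_familyI)

lemma poly_form_family_zero: "poly_form_family d (\<lambda>x s t. 0)"
  by (rule poly_form_familyI[of "\<lambda>m x. 0"]) (auto intro: polyfun.pconst simp: form_of_zero)

lemma poly_form_family_one: "poly_form_family 0 (\<lambda>x s t. 1)"
  by (rule poly_form_familyI[of "\<lambda>m x. 1"]) (auto intro: polyfun.pconst simp: form_of_def)

lemma poly_form_family_s: "poly_form_family 1 (\<lambda>x s t. s)"
  using form_of_monomial_s[of 1 1]
  by (intro poly_form_familyI[of "\<lambda>m x. if m = 1 then 1 else 0"]) (auto intro: polyfun.pconst)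

lemma poly_form_family_add:
  assumes "poly_form_family d F" "poly_form_family d G"
  shows "poly_form_family d (\<lambda>x s t. F x s t + G x s t)"
proof -
  obtain C1 C2 where "\<And>m. polyfun (C1 m)" "\<And>x s t. F x s t = form_of d (\<lambda>m. C1 m x) s t"
    "\<And>m. polyfun (C2 m)" "\<And>x s t. G x s t = form_of d (\<lambda>m. C2 m x) s t"
    using assms by (metis poly_form_familyE)
  then show ?thesis
    by (intro poly_form_familyI[of "\<lambda>m x. C1 m x + C2 m x"]) (auto intro: polyfun.padd simp: form_of_add)
qed

lemma poly_form_family_cmult:
  assumes "poly_form_family d F"
  shows "poly_form_family d (\<lambda>x s t. k * F x s t)"
proof -
  obtain C where "\<And>m. polyfun (C m)" "\<And>x s t. F x s t = form_of d (\<lambda>m. C m x) s t"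
    using assms by (metis poly_form_familyE)
  then show ?thesis
    by (intro poly_form_familyI[of "\<lambda>m x. k * C m x"]) (auto intro: polyfun_cmult simp: form_of_cmult)
qed

lemma poly_form_family_mult:
  assumes "poly_form_family d1 F" "poly_form_family d2 G"
  shows "poly_form_family (d1 + d2) (\<lambda>x s t. F x s t * G x s t)"
proof -
  obtain C1 C2 where C: "\<And>m. polyfun (C1 m)" "\<And>x s t. F x s t = form_of d1 (\<lambda>m. C1 m x) s t"
    "\<And>m. polyfun (C2 m)" "\<And>x s t. G x s t = form_of d2 (\<lambda>m. C2 m x) s t"
    using assms by (metis poly_form_familyE)
  show ?thesis
  proof (cases "0 \<le> d1 \<and> 0 \<le> d2")
    case True
    show ?thesis
    proof (rule poly_form_familyI)
      show "polyfun (\<lambda>x. coeff_conv (nat d1) (nat d2) (\<lambda>m. C1 m x) (\<lambda>m. C2 m x) m)" for m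
        unfolding coeff_conv_def by (intro polyfun_sum polyfun_if polyfun.pmult polyfun.pconst C) simp_all
      show "F x s t * G x s t = form_of (d1 + d2) (\<lambda>m. coeff_conv (nat d1) (nat d2) (\<lambda>m. C1 m x) (\<lambda>m. C2 m x) m) s t"
        for x s t
        using True by (simp add: C form_of_mult)
    qed
  next
    case False
    then have "F x s t * G x s t = 0" for x s t
      by (auto simp: C form_of_def)
    then show ?thesis
      by (intro poly_form_family_cong[OF poly_form_family_zero refl]) simp
  qed
qed

lemma poly_form_family_sum:
  "finite A \<Longrightarrow> (\<And>a. a \<in> A \<Longrightarrow> poly_form_family d (F a))
    \<Longrightarrow> poly_form_family d (\<lambda>x s t. \<Sum>a\<in>A. F a x s t)"
  by (induction A rule: finite_induct) (auto intro: poly_form_family_zero poly_form_family_add)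

lemma poly_form_family_prod:
  "finite A \<Longrightarrow> (\<And>a. a \<in> A \<Longrightarrow> poly_form_family (d a) (F a))
    \<Longrightarrow> poly_form_family (\<Sum>a\<in>A. d a) (\<lambda>x s t. \<Prod>a\<in>A. F a x s t)"
  by (induction A rule: finite_induct) (auto intro: poly_form_family_one poly_form_family_mult)

lemma poly_form_family_det:
  assumes "\<And>x s t. M x s t \<in> carrier_mat n n"
    and "\<And>i j. i < n \<Longrightarrow> j < n \<Longrightarrow> poly_form_family (r i + q j) (\<lambda>x s t. M x s t $$ (i, j))"
  shows "poly_form_family ((\<Sum>i<n. r i) + (\<Sum>j<n. q j)) (\<lambda>x s t. det (M x s t))"
proof -
  have summand: "poly_form_family ((\<Sum>i<n. r i) + (\<Sum>j<n. q j))
      (\<lambda>x s t. signof p * (\<Prod>i\<in>{0..<n}. M x s t $$ (i, p i)))" if p: "p permutes {0..<n}" for p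
  proof -
    have deg: "(\<Sum>i\<in>{0..<n}. r i + q (p i)) = (\<Sum>i<n. r i) + (\<Sum>j<n. q j)"
      using sum.permute[OF p, of q] by (simp add: sum.distrib atLeast0LessThan comp_def)
    have "poly_form_family (\<Sum>i\<in>{0..<n}. r i + q (p i)) (\<lambda>x s t. \<Prod>i\<in>{0..<n}. M x s t $$ (i, p i))"
      using p by (intro poly_form_family_prod[where F = "\<lambda>i x s t. M x s t $$ (i, p i)"] assms(2))
        (auto simp: permutes_in_image)
    from poly_form_family_cmult[OF this, of "signof p"] show ?thesis
      by (simp only: deg)
  qed
  have "poly_form_family ((\<Sum>i<n. r i) + (\<Sum>j<n. q j))
      (\<lambda>x s t. \<Sum>p\<in>{p. p permutes {0..<n}}. signof p * (\<Prod>i\<in>{0..<n}. M x s t $$ (i, p i)))"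
    by (rule poly_form_family_sum) (auto simp: finite_permutations intro: summand)
  then show ?thesis
    by (rule poly_form_family_cong) (simp_all add: det_def'[OF assms(1)])
qed

section \<open>The resultant\<close>

text \<open>Row \<open>i < D2\<close> holds the coefficients of \<open>s^i t^(D2-1-i) A\<close> and row \<open>D2 + j\<close> those of
  \<open>s^j t^(D1-1-j) B\<close>, with respect to the monomials \<open>s^k t^(D1+D2-1-k)\<close>.\<close>

definition sylvester_mat :: "nat \<Rightarrow> nat \<Rightarrow> (nat \<Rightarrow> complex) \<Rightarrow> (nat \<Rightarrow> complex) \<Rightarrow> complex mat" where
  "sylvester_mat D1 D2 a b = mat (D1 + D2) (D1 + D2) (\<lambda>(i, k).
     if i < D2 then (if i \<le> k \<and> k - i \<le> D1 then a (k - i) else 0)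
     else (if i - D2 \<le> k \<and> k - (i - D2) \<le> D2 then b (k - (i - D2)) else 0))"

lemma sylvester_mat_carrier: "sylvester_mat D1 D2 a b \<in> carrier_mat (D1 + D2) (D1 + D2)"
  by (simp add: sylvester_mat_def)

lemma shifted_coeffs_sum:
  assumes "i + D < n"
  shows "(\<Sum>k<n. (if i \<le> k \<and> k - i \<le> D then g (k - i) else 0) * (s ^ k * t ^ (n - 1 - k)))
       = s ^ i * t ^ (n - 1 - i - D) * form_of (int D) g s t"
proof -
  have "(\<Sum>k<n. (if i \<le> k \<and> k - i \<le> D then g (k - i) else 0) * (s ^ k * t ^ (n - 1 - k)))
      = (\<Sum>k\<in>{k\<in>{..<n}. i \<le> k \<and> k - i \<le> D}. g (k - i) * (s ^ k * t ^ (n - 1 - k)))"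
    by (subst sum.inter_filter) (auto intro!: sum.cong)
  also have "{k\<in>{..<n}. i \<le> k \<and> k - i \<le> D} = {0 + i..D + i}"
    using assms by auto
  also have "(\<Sum>k\<in>{0 + i..D + i}. g (k - i) * (s ^ k * t ^ (n - 1 - k)))
      = (\<Sum>m\<le>D. g m * (s ^ (m + i) * t ^ (n - 1 - (m + i))))"
    by (simp only: sum.shift_bounds_cl_nat_ivl) (simp add: atLeast0AtMost)
  also have "\<dots> = s ^ i * t ^ (n - 1 - i - D) * (\<Sum>m\<le>D. g m * s ^ m * t ^ (D - m))"
    unfolding sum_distrib_left
  proof (intro sum.cong refl)
    fix m assume "m \<in> {..D}"
    with assms have "n - 1 - (m + i) = (n - 1 - i - D) + (D - m)" by auto
    then show "g m * (s ^ (m + i) * t ^ (n - 1 - (m + i)))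
        = s ^ i * t ^ (n - 1 - i - D) * (g m * s ^ m * t ^ (D - m))"
      by (simp add: power_add algebra_simps)
  qed
  finally show ?thesis by (simp add: form_of_def)
qed

lemma det_sylvester_mat_eq_0:
  assumes "(s, t) \<noteq> (0, 0)" "form_of (int D1) a s t = 0" "form_of (int D2) b s t = 0" "0 < D1 + D2"
  shows "det (sylvester_mat D1 D2 a b) = 0"
proof -
  define n where "n = D1 + D2"
  define w where "w = vec n (\<lambda>k. s ^ k * t ^ (n - 1 - k))"
  have "w \<noteq> 0\<^sub>v n"
  proof
    assume "w = 0\<^sub>v n"
    then have "w $ 0 = 0" "w $ (n - 1) = 0" using assms(4) by (auto simp: n_def)
    then show False using assms(1,4) by (auto simp: w_def n_def)
  qed
  moreover have "sylvester_mat D1 D2 a b *\<^sub>v w = 0\<^sub>v n"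
  proof (rule eq_vecI)
    fix i assume "i < dim_vec (0\<^sub>v n :: complex vec)"
    then have i: "i < n" by simp
    have "(sylvester_mat D1 D2 a b *\<^sub>v w) $ i = (\<Sum>k<n. sylvester_mat D1 D2 a b $$ (i, k) * w $ k)"
      using i carrier_matD[OF sylvester_mat_carrier[of D1 D2 a b]]
      by (simp add: n_def w_def scalar_prod_def atLeast0LessThan)
    also have "\<dots> = (\<Sum>k<n.
        (if i < D2 then (if i \<le> k \<and> k - i \<le> D1 then a (k - i) else 0)
         else (if i - D2 \<le> k \<and> k - (i - D2) \<le> D2 then b (k - (i - D2)) else 0)) * (s ^ k * t ^ (n - 1 - k)))"
      using i by (intro sum.cong refl) (simp add: sylvester_mat_def n_def w_def)
    finally have row: "(sylvester_mat D1 D2 a b *\<^sub>v w) $ i = \<dots>" .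
    show "(sylvester_mat D1 D2 a b *\<^sub>v w) $ i = 0\<^sub>v n $ i"
    proof (cases "i < D2")
      case True
      then show ?thesis
        using i row shifted_coeffs_sum[of i D1 n a s t] assms(2) by (simp add: n_def)
    next
      case False
      then show ?thesis
        using i row shifted_coeffs_sum[of "i - D2" D2 n b s t] assms(3) by (simp add: n_def)
    qed
  qed (simp add: sylvester_mat_def n_def)
  moreover have "sylvester_mat D1 D2 a b \<in> carrier_mat n n"
    by (simp add: sylvester_mat_def n_def)
  moreover have "w \<in> carrier_vec n"
    by (simp add: w_def)
  ultimately show ?thesis
    using det_0_iff_vec_prod_zero by blast
qed

lemma det_sylvester_mat_monomials_neq_0:
  assumes "\<And>m. m \<le> D1 \<Longrightarrow> a m = (if m = D1 then \<sigma>1 else 0)"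
    and "\<And>m. m \<le> D2 \<Longrightarrow> b m = (if m = 0 then \<sigma>2 else 0)"
    and "\<sigma>1 \<noteq> 0" "\<sigma>2 \<noteq> 0"
  shows "det (sylvester_mat D1 D2 a b) \<noteq> 0"
proof
  define n where "n = D1 + D2"
  assume "det (sylvester_mat D1 D2 a b) = 0"
  then obtain v where v: "v \<in> carrier_vec n" "v \<noteq> 0\<^sub>v n" "sylvester_mat D1 D2 a b *\<^sub>v v = 0\<^sub>v n"
    using det_0_iff_vec_prod_zero[OF sylvester_mat_carrier[of D1 D2 a b]] unfolding n_def by blast
  have row: "(\<Sum>k\<in>{0..<n}. sylvester_mat D1 D2 a b $$ (i, k) * v $ k) = 0" if "i < n" for i
  proof -
    have "(sylvester_mat D1 D2 a b *\<^sub>v v) $ i = 0" using v(3) that by simp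
    then show ?thesis using that v(1) by (simp add: sylvester_mat_def n_def scalar_prod_def)
  qed
  have "v $ k = 0" if k: "k < n" for k
  proof (cases "D1 \<le> k")
    case True
    have "(\<Sum>k'\<in>{0..<n}. sylvester_mat D1 D2 a b $$ (k - D1, k') * v $ k')
        = (\<Sum>k'\<in>{0..<n}. if k' = k then \<sigma>1 * v $ k' else 0)"
      by (rule sum.cong) (use k True in \<open>auto simp: sylvester_mat_def n_def assms(1)\<close>)
    then show ?thesis using row[of "k - D1"] k True assms(3) by (simp add: n_def)
  next
    case False
    have "(\<Sum>k'\<in>{0..<n}. sylvester_mat D1 D2 a b $$ (k + D2, k') * v $ k')
        = (\<Sum>k'\<in>{0..<n}. if k' = k then \<sigma>2 * v $ k' else 0)"
      by (rule sum.cong) (use k False in \<open>auto simp: sylvester_mat_def n_def assms(2)\<close>)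
    then show ?thesis using row[of "k + D2"] k False assms(4) by (simp add: n_def)
  qed
  then have "v = 0\<^sub>v n" using v(1) by (intro eq_vecI) auto
  then show False using v(2) by simp
qed

lemma polyfun_det_sylvester_mat:
  assumes "\<And>m. polyfun (A m)" "\<And>m. polyfun (B m)"
  shows "polyfun (\<lambda>x. det (sylvester_mat D1 D2 (\<lambda>m. A m x) (\<lambda>m. B m x)))"
  by (rule polyfun_det[OF sylvester_mat_carrier]) (simp add: sylvester_mat_def polyfun_if assms polyfun.pconst)

text \<open>The factor \<open>s\<close> makes the Sylvester matrix nonempty even when both degrees vanish.\<close>

lemma resultant_polyfun:
  assumes F: "poly_form_family (int Da) F" and G: "poly_form_family (int Db) G"
    and F_z: "\<And>s t. F z s t = s ^ Da" and G_z: "\<And>s t. G z s t = t ^ Db"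
  obtains P where "polyfun P" "P z \<noteq> 0"
    "\<And>x s t. (s, t) \<noteq> (0, 0) \<Longrightarrow> F x s t = 0 \<Longrightarrow> G x s t = 0 \<Longrightarrow> P x = 0"
proof -
  have "poly_form_family (int (Da + 1)) (\<lambda>x s t. s * F x s t)"
    by (rule poly_form_family_cong[OF poly_form_family_mult[OF poly_form_family_s F]]) auto
  then obtain A where A: "\<And>m. polyfun (A m)" "\<And>x s t. s * F x s t = form_of (int (Da + 1)) (\<lambda>m. A m x) s t"
    by (elim poly_form_familyE) blast
  obtain B where B: "\<And>m. polyfun (B m)" "\<And>x s t. G x s t = form_of (int Db) (\<lambda>m. B m x) s t"
    using G by (elim poly_form_familyE) blast
  define P where "P x = det (sylvester_mat (Da + 1) Db (\<lambda>m. A m x) (\<lambda>m. B m x))" for x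
  show thesis
  proof
    show "polyfun P"
      unfolding P_def by (intro polyfun_det_sylvester_mat A B)
    have "A m z = (if m = Da + 1 then 1 else 0)" if "m \<le> Da + 1" for m
    proof (rule form_of_coeffs_eq[where a = "\<lambda>m. A m z"])
      show "form_of (int (Da + 1)) (\<lambda>m. A m z) s t
          = form_of (int (Da + 1)) (\<lambda>m. if m = Da + 1 then 1 else 0) s t" for s t
        by (simp only: A(2)[symmetric] form_of_monomial_s F_z) simp
    qed (use that in simp_all)
    moreover have "B m z = (if m = 0 then 1 else 0)" if "m \<le> Db" for m
    proof (rule form_of_coeffs_eq[where a = "\<lambda>m. B m z"])
      show "form_of (int Db) (\<lambda>m. B m z) s t = form_of (int Db) (\<lambda>m. if m = 0 then 1 else 0) s t" for s t
        by (simp only: B(2)[symmetric] form_of_monomial_t G_z) simp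
    qed (use that in simp_all)
    ultimately show "P z \<noteq> 0"
      unfolding P_def by (intro det_sylvester_mat_monomials_neq_0) auto
    fix x s t
    assume st: "(s, t) \<noteq> (0, 0)" and "F x s t = 0" "G x s t = 0"
    then have "form_of (int (Da + 1)) (\<lambda>m. A m x) s t = 0" "form_of (int Db) (\<lambda>m. B m x) s t = 0"
      unfolding A(2)[symmetric] B(2)[symmetric] by simp_all
    then show "P x = 0"
      unfolding P_def using st by (intro det_sylvester_mat_eq_0) simp_all
  qed
qed

section \<open>Linear algebra at a point\<close>

lemma det_diagonal_mat:
  assumes "\<And>i j. i < n \<Longrightarrow> j < n \<Longrightarrow> i \<noteq> j \<Longrightarrow> X i j = 0"
  shows "det (mat n n (\<lambda>(i, j). X i j)) = (\<Prod>i<n. X i i)"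
proof -
  have "det (mat n n (\<lambda>(i, j). X i j)) = prod_list (diag_mat (mat n n (\<lambda>(i, j). X i j)))"
    by (rule det_upper_triangular[of _ n]) (auto simp: upper_triangular_def assms)
  also have "\<dots> = (\<Prod>i<n. X i i)"
    by (simp add: prod.list_conv_set_nth diag_mat_def atLeast0LessThan)
  finally show ?thesis .
qed

text \<open>Bordering by a unit entry moves a \<open>{1..n}\<close>-indexed matrix into the \<open>0\<close>-based setting of
  \<open>Jordan_Normal_Form\<close> without changing its determinant \<open>detf\<close>.\<close>

definition bordered_mat :: "nat \<Rightarrow> (nat \<Rightarrow> nat \<Rightarrow> complex) \<Rightarrow> complex mat" where
  "bordered_mat n g = mat (Suc n) (Suc n)
     (\<lambda>(i, j). if i = 0 \<and> j = 0 then 1 else if i = 0 \<or> j = 0 then 0 else g i j)"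

lemma bordered_mat_carrier: "bordered_mat n g \<in> carrier_mat (Suc n) (Suc n)"
  by (simp add: bordered_mat_def)

lemma prod_bordered_mat:
  assumes p: "p permutes {0..<Suc n}"
  shows "(\<Prod>i\<in>{0..<Suc n}. bordered_mat n g $$ (i, p i))
       = (if p 0 = 0 then \<Prod>i\<in>{1..n}. g i (p i) else 0)"
proof -
  have "{0..<Suc n} = insert 0 {1..n}" by auto
  then have split: "(\<Prod>i\<in>{0..<Suc n}. bordered_mat n g $$ (i, p i))
      = bordered_mat n g $$ (0, p 0) * (\<Prod>i\<in>{1..n}. bordered_mat n g $$ (i, p i))"
    by simp
  have "p 0 < Suc n"
    using permutes_in_image[OF p, of 0] by simp
  moreover have "(\<Prod>i\<in>{1..n}. bordered_mat n g $$ (i, p i)) = (\<Prod>i\<in>{1..n}. g i (p i))" if "p 0 = 0"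
  proof (intro prod.cong refl)
    fix i assume i: "i \<in> {1..n}"
    then have "p i \<noteq> p 0"
      using permutes_inj[OF p] by (auto simp: inj_eq)
    then have "i < Suc n" "p i < Suc n" "i \<noteq> 0" "p i \<noteq> 0"
      using i that permutes_in_image[OF p, of i] by auto
    then show "bordered_mat n g $$ (i, p i) = g i (p i)"
      by (simp add: bordered_mat_def)
  qed
  ultimately show ?thesis
    unfolding split by (simp add: bordered_mat_def)
qed

lemma permutes_fixing_0_iff: "p permutes {0..<Suc n} \<and> p 0 = 0 \<longleftrightarrow> p permutes {1..n}"
proof
  assume p: "p permutes {0..<Suc n} \<and> p 0 = 0"
  show "p permutes {1..n}"
  proof (rule permutes_superset)
    show "p permutes {0..<Suc n}"
      using p ..
    fix x assume "x \<in> {0..<Suc n} - {1..n}"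
    then have "x = 0" by auto
    then show "p x = x" using p by simp
  qed
next
  assume p: "p permutes {1..n}"
  have "{1..n} \<subseteq> {0..<Suc n}" by auto
  then show "p permutes {0..<Suc n} \<and> p 0 = 0"
    using permutes_subset[OF p] permutes_not_in[OF p, of 0] by simp
qed

lemma det_bordered_mat: "det (bordered_mat n (\<lambda>i j. g i j s t)) = detf n g s t"
proof -
  have "det (bordered_mat n (\<lambda>i j. g i j s t))
      = (\<Sum>p\<in>{p. p permutes {0..<Suc n}}. signof p * (\<Prod>i\<in>{0..<Suc n}. bordered_mat n (\<lambda>i j. g i j s t) $$ (i, p i)))"
    by (rule det_def'[OF bordered_mat_carrier])
  also have "\<dots> = (\<Sum>p\<in>{p. p permutes {0..<Suc n}}. if p 0 = 0 then signof p * (\<Prod>i\<in>{1..n}. g i (p i) s t) else 0)"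
  proof (intro sum.cong refl)
    fix p assume "p \<in> {p. p permutes {0..<Suc n}}"
    then show "signof p * (\<Prod>i\<in>{0..<Suc n}. bordered_mat n (\<lambda>i j. g i j s t) $$ (i, p i))
        = (if p 0 = 0 then signof p * (\<Prod>i\<in>{1..n}. g i (p i) s t) else 0)"
      by (simp only: mem_Collect_eq prod_bordered_mat) simp
  qed
  also have "\<dots> = (\<Sum>p\<in>{p \<in> {p. p permutes {0..<Suc n}}. p 0 = 0}. signof p * (\<Prod>i\<in>{1..n}. g i (p i) s t))"
    by (rule sum.inter_filter[symmetric]) (simp add: finite_permutations)
  also have "\<dots> = detf n g s t"
    by (simp only: mem_Collect_eq permutes_fixing_0_iff detf_def)
  finally show ?thesis .
qed

lemma bordered_mat_mult:
  assumes "\<And>k l. k \<in> {1..n} \<Longrightarrow> l \<in> {1..n} \<Longrightarrow> (\<Sum>m\<in>{1..n}. g k m * h m l) = (if k = l then 1 else 0)"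
  shows "bordered_mat n g * bordered_mat n h = 1\<^sub>m (Suc n)"
proof (rule eq_matI)
  fix i j assume "i < dim_row (1\<^sub>m (Suc n) :: complex mat)" "j < dim_col (1\<^sub>m (Suc n) :: complex mat)"
  then have i: "i < Suc n" and j: "j < Suc n" by auto
  have "{0..<Suc n} = insert 0 {1..n}" by auto
  then have "(bordered_mat n g * bordered_mat n h) $$ (i, j)
      = bordered_mat n g $$ (i, 0) * bordered_mat n h $$ (0, j)
        + (\<Sum>m\<in>{1..n}. bordered_mat n g $$ (i, m) * bordered_mat n h $$ (m, j))"
    using i j by (simp add: bordered_mat_def scalar_prod_def)
  also have "\<dots> = 1\<^sub>m (Suc n) $$ (i, j)"
  proof (cases "i = 0 \<or> j = 0")
    case True
    then show ?thesis
      using i j by (auto simp: bordered_mat_def intro!: sum.neutral)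
  next
    case False
    then have "(\<Sum>m\<in>{1..n}. bordered_mat n g $$ (i, m) * bordered_mat n h $$ (m, j))
        = (\<Sum>m\<in>{1..n}. g i m * h m j)"
      using i j by (intro sum.cong) (auto simp: bordered_mat_def)
    then show ?thesis
      using False i j assms[of i j] by (simp add: bordered_mat_def)
  qed
  finally show "(bordered_mat n g * bordered_mat n h) $$ (i, j) = 1\<^sub>m (Suc n) $$ (i, j)" .
qed (simp_all add: bordered_mat_def)

lemma detf_neq_0_if_is_aut:
  assumes "is_aut n w g"
  shows "detf n g s t \<noteq> 0"
proof -
  obtain h where "\<forall>k\<in>{1..n}. \<forall>l\<in>{1..n}. \<forall>s t. mprod n g h k l s t = (if k = l then 1 else 0)"
    using assms unfolding is_aut_def by blast
  then have "bordered_mat n (\<lambda>i j. g i j s t) * bordered_mat n (\<lambda>i j. h i j s t) = 1\<^sub>m (Suc n)"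
    by (intro bordered_mat_mult) (simp add: mprod_def)
  then have "det (bordered_mat n (\<lambda>i j. g i j s t)) * det (bordered_mat n (\<lambda>i j. h i j s t)) = 1"
    by (metis det_mult det_one bordered_mat_carrier)
  then show ?thesis
    by (auto simp: det_bordered_mat)
qed

lemma left_inverse_kernel_eq_0:
  fixes G H :: "nat \<Rightarrow> nat \<Rightarrow> complex"
  assumes "finite S"
    and inv: "\<And>k l. k \<in> S \<Longrightarrow> l \<in> S \<Longrightarrow> (\<Sum>m\<in>S. H k m * G m l) = (if k = l then 1 else 0)"
    and kernel: "\<And>j. j \<in> S \<Longrightarrow> (\<Sum>y\<in>S. G j y * v y) = 0"
    and "a \<in> S"
  shows "v a = 0"
proof -
  have "v a = (\<Sum>y\<in>S. if a = y then v y else 0)"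
    using assms(1,4) by simp
  also have "\<dots> = (\<Sum>y\<in>S. (\<Sum>j\<in>S. H a j * G j y) * v y)"
    using inv assms(4) by (intro sum.cong) auto
  also have "\<dots> = (\<Sum>j\<in>S. H a j * (\<Sum>y\<in>S. G j y * v y))"
    unfolding sum_distrib_left sum_distrib_right by (subst sum.swap) (simp add: mult.assoc)
  also have "\<dots> = 0"
    using kernel by simp
  finally show ?thesis .
qed

lemma congruence_eq_0_imp_eq_0:
  fixes G H B :: "nat \<Rightarrow> nat \<Rightarrow> complex"
  assumes "finite S"
    and inv: "\<And>k l. k \<in> S \<Longrightarrow> l \<in> S \<Longrightarrow> (\<Sum>m\<in>S. H k m * G m l) = (if k = l then 1 else 0)"
    and zero: "\<And>i j. i \<in> S \<Longrightarrow> j \<in> S \<Longrightarrow> (\<Sum>x\<in>S. \<Sum>y\<in>S. G i x * B x y * G j y) = 0"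
    and "a \<in> S" "b \<in> S"
  shows "B a b = 0"
proof -
  have GB: "(\<Sum>x\<in>S. G i x * B x y) = 0" if i: "i \<in> S" and y: "y \<in> S" for i y
  proof (rule left_inverse_kernel_eq_0[OF assms(1) inv _ y])
    fix j assume "j \<in> S"
    have "(\<Sum>y\<in>S. G j y * (\<Sum>x\<in>S. G i x * B x y)) = (\<Sum>x\<in>S. \<Sum>y\<in>S. G i x * B x y * G j y)"
      unfolding sum_distrib_left by (subst sum.swap) (simp add: mult_ac)
    then show "(\<Sum>y\<in>S. G j y * (\<Sum>x\<in>S. G i x * B x y)) = 0"
      using zero[OF i \<open>j \<in> S\<close>] by simp
  qed
  show ?thesis
    by (rule left_inverse_kernel_eq_0[OF assms(1) inv GB[OF _ assms(5)] assms(4)])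
qed

section \<open>The pencil of the four matrices\<close>

definition pencil_vanishes_at :: "(nat \<Rightarrow> int) \<Rightarrow> (nat \<Rightarrow> int) \<Rightarrow> int \<Rightarrow> (nat \<times> nat \<times> nat \<times> nat \<Rightarrow> complex)
    \<Rightarrow> complex \<Rightarrow> complex \<Rightarrow> bool" where
  "pencil_vanishes_at e f N c s0 t0 \<longleftrightarrow>
     (\<exists>\<mu>. (\<exists>l\<in>{1..4}. \<mu> l \<noteq> 0) \<and>
        (\<forall>a\<in>{1..5}. \<forall>b\<in>{1..5}. (\<Sum>l\<in>{1..4}. \<mu> l * entry e f N c l a b s0 t0) = 0))"

lemma normal_form_imp_pencil_vanishes:
  assumes G: "inG e f g4 g5" and K: "K \<in> {1..4}" and NF: "normal_form_at e f N g4 g5 c K s0 t0"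
  shows "pencil_vanishes_at e f N c s0 t0"
proof -
  define \<mu> where "\<mu> l = g4 K l s0 t0" for l
  define E where "E l a b = entry e f N c l a b s0 t0" for l a b
  define B where "B a b = (\<Sum>l\<in>{1..4}. \<mu> l * E l a b)" for a b
  have aut4: "is_aut 4 e g4" and aut5: "is_aut 5 f g5"
    using G by (auto simp: inG_def)
  obtain h4 where h4: "\<forall>k\<in>{1..4}. \<forall>l\<in>{1..4}. \<forall>s t. mprod 4 g4 h4 k l s t = (if k = l then 1 else 0)"
    using aut4 unfolding is_aut_def by blast
  obtain h5 where h5: "\<forall>k\<in>{1..5}. \<forall>l\<in>{1..5}. \<forall>s t. mprod 5 h5 g5 k l s t = (if k = l then 1 else 0)"
    using aut5 unfolding is_aut_def by blast
  have "\<exists>l\<in>{1..4}. \<mu> l \<noteq> 0"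
  proof (rule ccontr)
    assume "\<not> (\<exists>l\<in>{1..4}. \<mu> l \<noteq> 0)"
    then have "mprod 4 g4 h4 K K s0 t0 = 0"
      by (simp add: mprod_def \<mu>_def)
    then show False
      using h4 K by auto
  qed
  moreover have congruent_0: "(\<Sum>x\<in>{1..5}. \<Sum>y\<in>{1..5}. g5 i x s0 t0 * B x y * g5 j y s0 t0) = 0"
    if "i \<in> {1..5}" "j \<in> {1..5}" for i j
  proof -
    have "(\<Sum>x\<in>{1..5}. \<Sum>y\<in>{1..5}. g5 i x s0 t0 * B x y * g5 j y s0 t0)
        = (\<Sum>x\<in>{1..5}. \<Sum>y\<in>{1..5}. \<Sum>l\<in>{1..4}. \<mu> l * (g5 i x s0 t0 * E l x y * g5 j y s0 t0))"
      by (intro sum.cong refl) (simp add: B_def sum_distrib_left sum_distrib_right mult_ac)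
    also have "\<dots> = (\<Sum>x\<in>{1..5}. \<Sum>l\<in>{1..4}. \<Sum>y\<in>{1..5}. \<mu> l * (g5 i x s0 t0 * E l x y * g5 j y s0 t0))"
      by (intro sum.cong refl sum.swap)
    also have "\<dots> = (\<Sum>l\<in>{1..4}. \<mu> l * (\<Sum>x\<in>{1..5}. \<Sum>y\<in>{1..5}. g5 i x s0 t0 * E l x y * g5 j y s0 t0))"
      unfolding sum_distrib_left by (rule sum.swap)
    also have "\<dots> = detf 4 g4 s0 t0 * translate_entry e f N g4 g5 c K i j s0 t0"
      using detf_neq_0_if_is_aut[OF aut4] by (simp add: translate_entry_def \<mu>_def E_def)
    also have "\<dots> = 0"
      using NF that by (simp add: normal_form_at_def)
    finally show ?thesis .
  qed
  moreover have "B a b = 0" if "a \<in> {1..5}" "b \<in> {1..5}" for a b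
  proof (rule congruence_eq_0_imp_eq_0[where S = "{1..5}" and G = "\<lambda>k l. g5 k l s0 t0"
        and H = "\<lambda>k l. h5 k l s0 t0", OF _ _ congruent_0 that])
    show "(\<Sum>m\<in>{1..5}. h5 k m s0 t0 * g5 m l s0 t0) = (if k = l then 1 else 0)"
      if "k \<in> {1..5}" "l \<in> {1..5}" for k l
      using h5 that by (simp add: mprod_def)
  qed simp
  ultimately show ?thesis
    unfolding pencil_vanishes_at_def B_def E_def by blast
qed

definition admissible_slot :: "(nat \<Rightarrow> int) \<Rightarrow> (nat \<Rightarrow> int) \<Rightarrow> int \<Rightarrow> nat \<Rightarrow> nat \<times> nat \<Rightarrow> bool" where
  "admissible_slot e f N k ij \<longleftrightarrow>
     1 \<le> fst ij \<and> fst ij < snd ij \<and> snd ij \<le> 5 \<and> 0 \<le> dd e f N k (fst ij) (snd ij)"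

definition pencil_mat :: "(nat \<Rightarrow> int) \<Rightarrow> (nat \<Rightarrow> int) \<Rightarrow> int \<Rightarrow> (nat \<times> nat \<times> nat \<times> nat \<Rightarrow> complex)
    \<Rightarrow> (nat \<times> nat) list \<Rightarrow> complex \<Rightarrow> complex \<Rightarrow> complex mat" where
  "pencil_mat e f N c ps s t =
     mat 4 4 (\<lambda>(r, k). entry e f N c (Suc k) (fst (ps ! r)) (snd (ps ! r)) s t)"

definition diagonal_degree :: "(nat \<Rightarrow> int) \<Rightarrow> (nat \<Rightarrow> int) \<Rightarrow> int \<Rightarrow> (nat \<times> nat) list \<Rightarrow> nat" where
  "diagonal_degree e f N ps = (\<Sum>r<4. nat (dd e f N (Suc r) (fst (ps ! r)) (snd (ps ! r))))"

lemma poly_form_family_entry: "i < j \<Longrightarrow> poly_form_family (dd e f N k i j) (\<lambda>c s t. entry e f N c k i j s t)"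
  by (rule poly_form_familyI[of "\<lambda>m c. c (k, i, j, m)"]) (auto intro: polyfun.pvar simp: entry_def)

lemma poly_form_family_det_pencil_mat:
  assumes "\<And>r. r < 4 \<Longrightarrow> admissible_slot e f N (Suc r) (ps ! r)"
  shows "poly_form_family (int (diagonal_degree e f N ps)) (\<lambda>c s t. det (pencil_mat e f N c ps s t))"
proof -
  have "poly_form_family ((\<Sum>r<4. f (fst (ps ! r)) + f (snd (ps ! r)) - N) + (\<Sum>k<4. e (Suc k)))
      (\<lambda>c s t. det (pencil_mat e f N c ps s t))"
  proof (rule poly_form_family_det)
    fix r k :: nat assume "r < 4" "k < 4"
    then have "fst (ps ! r) < snd (ps ! r)"
      using assms by (simp add: admissible_slot_def)
    from poly_form_family_entry[OF this, of e f N "Suc k"]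
    show "poly_form_family (f (fst (ps ! r)) + f (snd (ps ! r)) - N + e (Suc k))
        (\<lambda>c s t. pencil_mat e f N c ps s t $$ (r, k))"
      by (rule poly_form_family_cong) (use \<open>r < 4\<close> \<open>k < 4\<close> in \<open>simp_all add: dd_def pencil_mat_def\<close>)
  qed (simp add: pencil_mat_def)
  moreover have "(\<Sum>r<4. f (fst (ps ! r)) + f (snd (ps ! r)) - N) + (\<Sum>k<4. e (Suc k))
      = (\<Sum>r<4. dd e f N (Suc r) (fst (ps ! r)) (snd (ps ! r)))"
    by (simp add: dd_def sum.distrib[symmetric] algebra_simps)
  also have "\<dots> = int (diagonal_degree e f N ps)"
    using assms by (auto simp: diagonal_degree_def admissible_slot_def intro!: sum.cong)
  ultimately show ?thesis
    by simp
qed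

lemma det_pencil_mat_eq_0:
  assumes "pencil_vanishes_at e f N c s t" and slots: "\<And>r. r < 4 \<Longrightarrow> ps ! r \<in> {1..5} \<times> {1..5}"
  shows "det (pencil_mat e f N c ps s t) = 0"
proof -
  obtain \<mu> where \<mu>: "\<exists>l\<in>{1..4}. \<mu> l \<noteq> 0"
    "\<And>a b. a \<in> {1..5} \<Longrightarrow> b \<in> {1..5} \<Longrightarrow> (\<Sum>l\<in>{1..4}. \<mu> l * entry e f N c l a b s t) = 0"
    using assms(1) unfolding pencil_vanishes_at_def by blast
  define v where "v = vec 4 (\<lambda>k. \<mu> (Suc k))"
  have "v \<noteq> 0\<^sub>v 4"
  proof
    assume v0: "v = 0\<^sub>v 4"
    have "\<mu> l = 0" if "l \<in> {1..4}" for l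
    proof -
      have "v $ (l - 1) = 0" "Suc (l - 1) = l"
        using v0 that by auto
      then show ?thesis
        using that by (simp add: v_def)
    qed
    then show False
      using \<mu>(1) by blast
  qed
  moreover have "pencil_mat e f N c ps s t *\<^sub>v v = 0\<^sub>v 4"
  proof (rule eq_vecI)
    fix r assume "r < dim_vec (0\<^sub>v 4 :: complex vec)"
    then have r: "r < 4" by simp
    have "(pencil_mat e f N c ps s t *\<^sub>v v) $ r
        = (\<Sum>k<4. \<mu> (Suc k) * entry e f N c (Suc k) (fst (ps ! r)) (snd (ps ! r)) s t)"
      using r by (simp add: pencil_mat_def v_def scalar_prod_def atLeast0LessThan mult.commute)
    also have "\<dots> = 0"
      using \<mu>(2)[of "fst (ps ! r)" "snd (ps ! r)"] slots[OF r] by (simp add: sum.atLeast1_atMost_eq mem_Times_iff)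
    finally show "(pencil_mat e f N c ps s t *\<^sub>v v) $ r = 0\<^sub>v 4 $ r"
      using r by simp
  qed (simp add: pencil_mat_def)
  moreover have "pencil_mat e f N c ps s t \<in> carrier_mat 4 4"
    by (simp add: pencil_mat_def)
  moreover have "v \<in> carrier_vec 4"
    by (simp add: v_def)
  ultimately show ?thesis
    using det_0_iff_vec_prod_zero by blast
qed

definition diagonal_section :: "(nat \<Rightarrow> int) \<Rightarrow> (nat \<Rightarrow> int) \<Rightarrow> int \<Rightarrow> (nat \<times> nat) list \<Rightarrow> (nat \<times> nat) list
    \<Rightarrow> nat \<times> nat \<times> nat \<times> nat \<Rightarrow> complex" where
  "diagonal_section e f N ps qs = (\<lambda>(k, i, j, m).
     if k \<in> {1..4} \<and> (i, j) = ps ! (k - 1) \<and> m = nat (dd e f N k i j) then 1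
     else if k \<in> {1..4} \<and> (i, j) = qs ! (k - 1) \<and> m = 0 then 1 else 0)"

lemma diagonal_section_in_sections:
  assumes "\<And>r. r < 4 \<Longrightarrow> admissible_slot e f N (Suc r) (ps ! r)"
    and "\<And>r. r < 4 \<Longrightarrow> admissible_slot e f N (Suc r) (qs ! r)"
  shows "diagonal_section e f N ps qs \<in> sections e f N"
  unfolding sections_def
proof (intro CollectI allI impI)
  fix k i j m assume "diagonal_section e f N ps qs (k, i, j, m) \<noteq> 0"
  then have k: "k \<in> {1..4}"
    and slot: "ps ! (k - 1) = (i, j) \<and> m = nat (dd e f N k i j) \<or> qs ! (k - 1) = (i, j) \<and> m = 0"
    by (auto simp: diagonal_section_def split: if_splits)
  have "admissible_slot e f N k (ps ! (k - 1))" "admissible_slot e f N k (qs ! (k - 1))"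
    using assms[of "k - 1"] k by auto
  with k slot show "k \<in> {1..4} \<and> 1 \<le> i \<and> i < j \<and> j \<le> 5 \<and> 0 \<le> dd e f N k i j \<and> m \<le> nat (dd e f N k i j)"
    by (auto simp: admissible_slot_def)
qed

lemma diagonal_section_Suc:
  "k < 4 \<Longrightarrow> diagonal_section e f N ps qs (Suc k, i, j, m) =
    (if (i, j) = ps ! k \<and> m = nat (dd e f N (Suc k) i j) then 1 else if (i, j) = qs ! k \<and> m = 0 then 1 else 0)"
  by (simp add: diagonal_section_def)

lemma entry_diagonal_section_eq_0:
  assumes "k < 4" "i < j" "(i, j) \<noteq> ps ! k" "(i, j) \<noteq> qs ! k"
  shows "entry e f N (diagonal_section e f N ps qs) (Suc k) i j s t = 0"
  using assms by (simp add: entry_def diagonal_section_Suc form_of_zero)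

lemma entry_diagonal_section_s:
  assumes "k < 4" "admissible_slot e f N (Suc k) (ps ! k)" "ps ! k \<noteq> qs ! k"
  shows "entry e f N (diagonal_section e f N ps qs) (Suc k) (fst (ps ! k)) (snd (ps ! k)) s t
    = s ^ nat (dd e f N (Suc k) (fst (ps ! k)) (snd (ps ! k)))"
proof -
  obtain i j where ij: "ps ! k = (i, j)" by (cases "ps ! k")
  define d where "d = dd e f N (Suc k) i j"
  have "i < j" "0 \<le> d"
    using assms(2) ij by (auto simp: admissible_slot_def d_def)
  moreover have "form_of d (\<lambda>m. if m = nat d then 1 else 0) s t = s ^ nat d"
    using form_of_monomial_s[of "nat d" 1 s t] \<open>0 \<le> d\<close> by simp
  ultimately show ?thesis
    using assms(1,3) ij by (simp add: entry_def diagonal_section_Suc d_def cong: if_cong)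
qed

lemma entry_diagonal_section_t:
  assumes "k < 4" "admissible_slot e f N (Suc k) (qs ! k)" "qs ! k \<noteq> ps ! k"
  shows "entry e f N (diagonal_section e f N ps qs) (Suc k) (fst (qs ! k)) (snd (qs ! k)) s t
    = t ^ nat (dd e f N (Suc k) (fst (qs ! k)) (snd (qs ! k)))"
proof -
  obtain i j where ij: "qs ! k = (i, j)" by (cases "qs ! k")
  define d where "d = dd e f N (Suc k) i j"
  have "i < j" "0 \<le> d"
    using assms(2) ij by (auto simp: admissible_slot_def d_def)
  moreover have "form_of d (\<lambda>m. if m = 0 then 1 else 0) s t = t ^ nat d"
    using form_of_monomial_t[of "nat d" 1 s t] \<open>0 \<le> d\<close> by simp
  ultimately show ?thesis
    using assms(1,3) ij by (simp add: entry_def diagonal_section_Suc d_def cong: if_cong)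
qed

lemma det_pencil_mat_diagonal_section_s:
  assumes len: "length ps = 4" "length qs = 4" and "distinct ps" "set ps \<inter> set qs = {}"
    and slots: "\<And>r. r < 4 \<Longrightarrow> admissible_slot e f N (Suc r) (ps ! r)"
  shows "det (pencil_mat e f N (diagonal_section e f N ps qs) ps s t) = s ^ diagonal_degree e f N ps"
proof -
  have ne: "ps ! r \<noteq> qs ! k" if "r < 4" "k < 4" for r k
    using assms(4) len that by (metis disjoint_iff nth_mem)
  have "det (pencil_mat e f N (diagonal_section e f N ps qs) ps s t)
      = (\<Prod>r<4. entry e f N (diagonal_section e f N ps qs) (Suc r) (fst (ps ! r)) (snd (ps ! r)) s t)"
    unfolding pencil_mat_def
  proof (rule det_diagonal_mat)
    fix r k :: nat assume "r < 4" "k < 4" "r \<noteq> k"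
    then show "entry e f N (diagonal_section e f N ps qs) (Suc k) (fst (ps ! r)) (snd (ps ! r)) s t = 0"
      using slots[of r] ne[of r k] assms(3) len
      by (intro entry_diagonal_section_eq_0) (auto simp: admissible_slot_def nth_eq_iff_index_eq)
  qed
  also have "\<dots> = (\<Prod>r<4. s ^ nat (dd e f N (Suc r) (fst (ps ! r)) (snd (ps ! r))))"
    using slots ne by (intro prod.cong refl entry_diagonal_section_s) auto
  also have "\<dots> = s ^ diagonal_degree e f N ps"
    by (simp add: diagonal_degree_def power_sum)
  finally show ?thesis .
qed

lemma det_pencil_mat_diagonal_section_t:
  assumes len: "length ps = 4" "length qs = 4" and "distinct qs" "set ps \<inter> set qs = {}"
    and slots: "\<And>r. r < 4 \<Longrightarrow> admissible_slot e f N (Suc r) (qs ! r)"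
  shows "det (pencil_mat e f N (diagonal_section e f N ps qs) qs s t) = t ^ diagonal_degree e f N qs"
proof -
  have ne: "qs ! r \<noteq> ps ! k" if "r < 4" "k < 4" for r k
    using assms(4) len that by (metis disjoint_iff nth_mem)
  have "det (pencil_mat e f N (diagonal_section e f N ps qs) qs s t)
      = (\<Prod>r<4. entry e f N (diagonal_section e f N ps qs) (Suc r) (fst (qs ! r)) (snd (qs ! r)) s t)"
    unfolding pencil_mat_def
  proof (rule det_diagonal_mat)
    fix r k :: nat assume "r < 4" "k < 4" "r \<noteq> k"
    then show "entry e f N (diagonal_section e f N ps qs) (Suc k) (fst (qs ! r)) (snd (qs ! r)) s t = 0"
      using slots[of r] ne[of r k] assms(3) len
      by (intro entry_diagonal_section_eq_0) (auto simp: admissible_slot_def nth_eq_iff_index_eq)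
  qed
  also have "\<dots> = (\<Prod>r<4. t ^ nat (dd e f N (Suc r) (fst (qs ! r)) (snd (qs ! r))))"
    using slots ne by (intro prod.cong refl entry_diagonal_section_t) auto
  also have "\<dots> = t ^ diagonal_degree e f N qs"
    by (simp add: diagonal_degree_def power_sum)
  finally show ?thesis .
qed

lemma generic_section_pencil_nonvanishing:
  assumes len: "length ps = 4" "length qs = 4" and dist: "distinct ps" "distinct qs"
    and disj: "set ps \<inter> set qs = {}"
    and ps: "\<And>r. r < 4 \<Longrightarrow> admissible_slot e f N (Suc r) (ps ! r)"
    and qs: "\<And>r. r < 4 \<Longrightarrow> admissible_slot e f N (Suc r) (qs ! r)"
  shows "\<exists>Z. zariski_closed_in (sections e f N) Z \<and> Z \<noteq> sections e f N \<and>
    (\<forall>c \<in> sections e f N - Z. \<forall>s t. (s, t) \<noteq> (0, 0) \<longrightarrow> \<not> pencil_vanishes_at e f N c s t)"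
proof -
  define c0 where "c0 = diagonal_section e f N ps qs"
  have F_c0: "det (pencil_mat e f N c0 ps s t) = s ^ diagonal_degree e f N ps" for s t
    unfolding c0_def by (rule det_pencil_mat_diagonal_section_s[OF len dist(1) disj ps])
  have G_c0: "det (pencil_mat e f N c0 qs s t) = t ^ diagonal_degree e f N qs" for s t
    unfolding c0_def by (rule det_pencil_mat_diagonal_section_t[OF len dist(2) disj qs])
  obtain P where P: "polyfun P" "P c0 \<noteq> 0"
    and P_root: "\<And>c s t. (s, t) \<noteq> (0, 0) \<Longrightarrow> det (pencil_mat e f N c ps s t) = 0
      \<Longrightarrow> det (pencil_mat e f N c qs s t) = 0 \<Longrightarrow> P c = 0"
    using resultant_polyfun[where z = c0, OF poly_form_family_det_pencil_mat[OF ps]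
        poly_form_family_det_pencil_mat[OF qs] F_c0 G_c0] by blast
  have slots: "ps ! r \<in> {1..5} \<times> {1..5}" "qs ! r \<in> {1..5} \<times> {1..5}" if "r < 4" for r
    using ps[OF that] qs[OF that] by (auto simp: admissible_slot_def mem_Times_iff)
  show ?thesis
  proof (intro exI conjI ballI allI impI)
    show "zariski_closed_in (sections e f N) {c \<in> sections e f N. P c = 0}"
      unfolding zariski_closed_in_def using P(1) by (intro exI[of _ "{P}"]) auto
    show "{c \<in> sections e f N. P c = 0} \<noteq> sections e f N"
      using P(2) diagonal_section_in_sections[OF ps qs] by (auto simp: c0_def)
    fix c and s t :: complex
    assume c: "c \<in> sections e f N - {c \<in> sections e f N. P c = 0}" and st: "(s, t) \<noteq> (0, 0)"
    show "\<not> pencil_vanishes_at e f N c s t"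
    proof
      assume vanishes: "pencil_vanishes_at e f N c s t"
      have "P c = 0"
        using P_root[OF st det_pencil_mat_eq_0[OF vanishes slots(1)] det_pencil_mat_eq_0[OF vanishes slots(2)]] .
      with c show False
        by simp
    qed
  qed
qed

text \<open>All these slots satisfy \<open>i + j + k = 8\<close>, except \<open>(3, 5)\<close> in \<open>A\<^sub>4\<close>, whose degree
  exceeds that of \<open>(1, 3)\<close> in \<open>A\<^sub>4\<close> because \<open>f\<^sub>5 \<ge> f\<^sub>1\<close>.\<close>

lemma admissible_slots_of_degree_bounds:
  assumes "f 1 \<le> f 5"
    and deg: "\<And>i j k. 1 \<le> i \<Longrightarrow> i < j \<Longrightarrow> j \<le> 5 \<Longrightarrow> 1 \<le> k \<Longrightarrow> k \<le> 4 \<Longrightarrow>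
      i + j + k = 8 \<Longrightarrow> 0 \<le> dd e f N k i j"
    and r: "r < 4"
  shows "admissible_slot e f N (Suc r) ([(3, 4), (2, 4), (1, 4), (1, 3)] ! r)"
    and "admissible_slot e f N (Suc r) ([(2, 5), (1, 5), (2, 3), (3, 5)] ! r)"
proof -
  have r_cases: "r = 0 \<or> r = 1 \<or> r = 2 \<or> r = 3"
    using r by auto
  have "dd e f N 4 1 3 \<le> dd e f N 4 3 5"
    using assms(1) by (simp add: dd_def)
  then show "admissible_slot e f N (Suc r) ([(3, 4), (2, 4), (1, 4), (1, 3)] ! r)"
    and "admissible_slot e f N (Suc r) ([(2, 5), (1, 5), (2, 3), (3, 5)] ! r)"
    using r_cases deg[of 3 4 1] deg[of 2 4 2] deg[of 1 4 3] deg[of 1 3 4]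
      deg[of 2 5 1] deg[of 1 5 2] deg[of 2 3 3]
    by (auto simp: admissible_slot_def numeral_eq_Suc)
qed

theorem proposition5p1:
  fixes g :: nat and N :: int and e f :: "nat \<Rightarrow> int"
  assumes hN: "N = int g + 4"
    and he_pos: "1 \<le> e 1"
    and he_mono: "e 1 \<le> e 2" "e 2 \<le> e 3" "e 3 \<le> e 4"
    and he_sum: "(\<Sum>k\<in>{1..4}. e k) = N"
    and hf_mono: "f 1 \<le> f 2" "f 2 \<le> f 3" "f 3 \<le> f 4" "f 4 \<le> f 5"
    and hf_sum: "(\<Sum>i\<in>{1..5}. f i) = 2 * N"
    and cond_i: "\<And>i j k. 1 \<le> i \<Longrightarrow> i < j \<Longrightarrow> j \<le> 5 \<Longrightarrow> 1 \<le> k \<Longrightarrow> k \<le> 4 \<Longrightarrow>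
                   i + j + k = 8 \<Longrightarrow> 0 \<le> dd e f N k i j"
    and cond_ii: "dd e f N 1 1 5 < 0 \<Longrightarrow> dd e f N 1 2 4 < 0 \<Longrightarrow> dd e f N 4 1 2 < 0 \<Longrightarrow>
                   dd e f N 1 2 5 = 0"
  shows "\<exists>Z. zariski_closed_in (sections e f N) Z \<and> Z \<noteq> sections e f N \<and>
           (\<forall>c \<in> sections e f N - Z.
              \<not> (\<exists>K\<in>{1..4}. \<exists>s0 t0. (s0, t0) \<noteq> (0, 0) \<and>
                    (\<exists>g4 g5. inG e f g4 g5 \<and> normal_form_at e f N g4 g5 c K s0 t0)))"
proof -
  define ps :: "(nat \<times> nat) list" where "ps = [(3, 4), (2, 4), (1, 4), (1, 3)]"
  define qs :: "(nat \<times> nat) list" where "qs = [(2, 5), (1, 5), (2, 3), (3, 5)]"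
  have f15: "f 1 \<le> f 5"
    using hf_mono by simp
  have "length ps = 4" "length qs = 4" "distinct ps" "distinct qs" "set ps \<inter> set qs = {}"
    by (simp_all add: ps_def qs_def)
  then obtain Z where Z: "zariski_closed_in (sections e f N) Z" "Z \<noteq> sections e f N"
    "\<And>c s t. c \<in> sections e f N - Z \<Longrightarrow> (s, t) \<noteq> (0, 0) \<Longrightarrow> \<not> pencil_vanishes_at e f N c s t"
    using generic_section_pencil_nonvanishing[OF _ _ _ _ _
        admissible_slots_of_degree_bounds[OF f15 cond_i, folded ps_def qs_def]]
    by blast
  show ?thesis
  proof (intro exI conjI ballI notI)
    fix c assume c: "c \<in> sections e f N - Z"
    assume "\<exists>K\<in>{1..4}. \<exists>s0 t0. (s0, t0) \<noteq> (0, 0) \<and>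
      (\<exists>g4 g5. inG e f g4 g5 \<and> normal_form_at e f N g4 g5 c K s0 t0)"
    then obtain K s0 t0 g4 g5 where K: "K \<in> {1..4}" and st: "(s0, t0) \<noteq> (0, 0)"
      and G: "inG e f g4 g5" and NF: "normal_form_at e f N g4 g5 c K s0 t0"
      by blast
    from G K NF have "pencil_vanishes_at e f N c s0 t0"
      by (rule normal_form_imp_pencil_vanishes)
    with Z(3)[OF c st] show False ..
  qed (use Z in auto)
qed

end
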